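(* Let $n\ge2$, $\Delta\subset B_n$ a proper ideal, and let $\Delta^{\mathrm{aug}}$ denote the same family $\Delta$ regarded as a proper ideal of $B_{n+1}$. Then for $0\le i\le n$, $$h_i(\mathrm{Bier}(B_{n+1},\Delta^{\mathrm{aug}}))=h_{i-1}(\mathrm{Bier}(B_n,\Delta))+f_i(\Delta),$$ with the convention $h_{-1}=0$.
   Context: $B_m$ is the Boolean lattice of subsets of $[1,m]$. A proper ideal $\Delta\subset B_m$ is a nonempty family of subsets of $[1,m]$ closed under taking subsets with $[1,m]\notin\Delta$; $f_i(\Delta)$ is the number of sets of cardinality $i$ in $\Delta$. The Bier sphere $\mathrm{Bier}(B_m,\Delta)$ is the simplicial complex whose faces are the pairs $(B,C)$ with $B\subsetneq C\subseteq[1,m]$, $B\in\Delta$, $C\notin\Delta$, with $(B',C')$ a face of $(B,C)$ iff $B'\subseteq B$ and $C\subseteq C'$; the face $(B,C)$ has $|B|+m-|C|$ vertices, and all facets have $m-1$ vertices. For such a complex $\Gamma$, $f_j(\Gamma)$ is the number of faces with $j$ vertices ($f_0=1$) and $h_i(\Gamma):=\sum_{j=0}^{m-1}(-1)^{i+j}\binom{m-1-j}{m-1-i}f_j(\Gamma)$ for $0\le i\le m-1$, and $h_i:=0$ otherwise. *)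

theory Defs
  imports Main
begin

definition proper_ideal :: "nat \<Rightarrow> nat set set \<Rightarrow> bool" where
  "proper_ideal m D \<longleftrightarrow> D \<noteq> {} \<and> (\<forall>A\<in>D. A \<subseteq> {1..m})
     \<and> (\<forall>A\<in>D. \<forall>B. B \<subseteq> A \<longrightarrow> B \<in> D) \<and> {1..m} \<notin> D"

definition ideal_f :: "nat set set \<Rightarrow> nat \<Rightarrow> nat" where
  "ideal_f D i = card {A \<in> D. card A = i}"

definition bier_faces :: "nat \<Rightarrow> nat set set \<Rightarrow> (nat set \<times> nat set) set" where
  "bier_faces m D = {(B, C). B \<subset> C \<and> C \<subseteq> {1..m} \<and> B \<in> D \<and> C \<notin> D}"

definition bier_f :: "nat \<Rightarrow> nat set set \<Rightarrow> nat \<Rightarrow> nat" where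
  "bier_f m D j = card {(B, C) \<in> bier_faces m D. card B + m - card C = j}"

definition bier_h :: "nat \<Rightarrow> nat set set \<Rightarrow> int \<Rightarrow> int" where
  "bier_h m D i = (if 0 \<le> i \<and> i \<le> int m - 1 then
     (\<Sum>j = 0..m - 1. (-1) ^ (nat i + j) * int ((m - 1 - j) choose (m - 1 - nat i)) * int (bier_f m D j))
   else 0)"

end

theory Submission
  imports Defs
begin

text \<open>Split the faces (B, C) of Bier(B_{n+1}, D) according to whether n+1 lies in C.
  Those without n+1 are exactly the faces of Bier(B_n, D), each with one more vertex, so their
  contribution to h_i is h_{i-1}(Bier(B_n, D)). Those with n+1 are the faces
  (B, B \<union> S \<union> {n+1}) with B \<in> D and S \<subseteq> [n] - B, which have n - |S| vertices. For fixed B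
  their contribution to h_i is an alternating sum of binomial coefficients over the subsets S,
  which by Moebius inversion of C(|S|, k) = #{T \<subseteq> S. |T| = k} is 1 if |B| = i and 0 otherwise.\<close>

lemma sum_Pow_alternating_choose:
  fixes X :: "'a set"
  assumes "finite X"
  shows "(\<Sum>T\<in>Pow X. (-1::int) ^ (card X - card T) * int (card T choose k)) = of_bool (card X = k)"
proof -
  have sum_Pow_of_bool: "(\<Sum>T\<in>Pow S. of_bool (card T = k)) = int (card S choose k)"
    if "finite S" for S :: "'a set"
  proof -
    have "Pow S \<inter> {T. card T = k} = {T. T \<subseteq> S \<and> card T = k}"
      by blast
    then show ?thesis
      using that n_subsets[OF that] by simp
  qed
  show ?thesis
    by (rule inclusion_exclusion_mobius[where f = "\<lambda>T. of_bool (card T = k)", symmetric])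
      (simp_all only: sum_Pow_of_bool assms)
qed

definition face_vertices :: "nat \<Rightarrow> nat set \<times> nat set \<Rightarrow> nat" where
  "face_vertices m F = card (fst F) + m - card (snd F)"

definition h_coeff :: "nat \<Rightarrow> nat \<Rightarrow> nat \<Rightarrow> int" where
  "h_coeff m i j = (-1) ^ (i + j) * int ((m - 1 - j) choose (m - 1 - i))"

lemma h_coeff_Suc_Suc: "h_coeff (Suc m) (Suc i) (Suc j) = h_coeff m i j"
  by (simp add: h_coeff_def)

lemma h_coeff_Suc_0_Suc: "0 < m \<Longrightarrow> h_coeff (Suc m) 0 (Suc j) = 0"
  by (simp add: h_coeff_def)

lemma finite_bier_faces: "finite (bier_faces m D)"
proof (rule finite_subset)
  show "bier_faces m D \<subseteq> Pow {1..m} \<times> Pow {1..m}"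
    unfolding bier_faces_def by auto
qed simp

lemma bier_faces_card:
  assumes "F \<in> bier_faces m D"
  shows "card (fst F) < card (snd F)" and "card (snd F) \<le> m"
proof -
  obtain B C where F: "F = (B, C)" "B \<subset> C" "C \<subseteq> {1..m}"
    using assms unfolding bier_faces_def by auto
  then have "finite C"
    using finite_subset by blast
  with F show "card (fst F) < card (snd F)" and "card (snd F) \<le> m"
    by (auto intro: psubset_card_mono dest: card_mono[rotated])
qed

lemma face_vertices_less: "F \<in> bier_faces m D \<Longrightarrow> face_vertices m F < m"
  using bier_faces_card[of F m D] unfolding face_vertices_def by auto

lemma face_vertices_Suc:
  "F \<in> bier_faces m D \<Longrightarrow> face_vertices (Suc m) F = Suc (face_vertices m F)"
  using bier_faces_card[of F m D] unfolding face_vertices_def by auto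

lemma bier_h_eq_sum_faces:
  assumes "i < m"
  shows "bier_h m D (int i) = (\<Sum>F\<in>bier_faces m D. h_coeff m i (face_vertices m F))"
proof -
  have bier_f_eq: "int (bier_f m D j) = (\<Sum>F\<in>bier_faces m D. of_bool (face_vertices m F = j))" for j
  proof -
    have "{(B, C) \<in> bier_faces m D. card B + m - card C = j}
        = bier_faces m D \<inter> {F. face_vertices m F = j}"
      unfolding face_vertices_def by auto
    then show ?thesis
      unfolding bier_f_def by (simp add: finite_bier_faces)
  qed
  have "bier_h m D (int i) = (\<Sum>j = 0..m - 1. h_coeff m i j * int (bier_f m D j))"
    using assms unfolding bier_h_def h_coeff_def by auto
  also have "\<dots> = (\<Sum>j = 0..m - 1. \<Sum>F\<in>bier_faces m D. h_coeff m i j * of_bool (face_vertices m F = j))"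
    by (simp add: bier_f_eq sum_distrib_left)
  also have "\<dots> = (\<Sum>F\<in>bier_faces m D. \<Sum>j = 0..m - 1. h_coeff m i j * of_bool (face_vertices m F = j))"
    by (rule sum.swap)
  also have "\<dots> = (\<Sum>F\<in>bier_faces m D. h_coeff m i (face_vertices m F))"
    by (intro sum.cong refl) (auto dest: face_vertices_less)
  finally show ?thesis .
qed

lemma sum_faces_h_coeff_Suc:
  assumes "0 < m" and "i \<le> m"
  shows "(\<Sum>F\<in>bier_faces m D. h_coeff (Suc m) i (face_vertices (Suc m) F))
    = bier_h m D (int i - 1)"
proof (cases i)
  case 0
  then show ?thesis
    using assms by (simp add: face_vertices_Suc h_coeff_Suc_0_Suc bier_h_def)
next
  case (Suc i')
  then have "bier_h m D (int i - 1)
      = (\<Sum>F\<in>bier_faces m D. h_coeff m i' (face_vertices m F))"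
    using assms bier_h_eq_sum_faces[of i' m D] by simp
  then show ?thesis
    using Suc by (simp add: face_vertices_Suc h_coeff_Suc_Suc)
qed

definition cone_face :: "nat \<Rightarrow> nat set \<times> nat set \<Rightarrow> nat set \<times> nat set" where
  "cone_face n = (\<lambda>(B, S). (B, insert (Suc n) (B \<union> S)))"

lemma inj_on_cone_face: "inj_on (cone_face n) (SIGMA B:D. Pow ({1..n} - B))"
proof (rule inj_onI)
  fix x y
  assume "x \<in> (SIGMA B:D. Pow ({1..n} - B))" "y \<in> (SIGMA B:D. Pow ({1..n} - B))"
    and "cone_face n x = cone_face n y"
  moreover have "snd x = snd (cone_face n x) - {Suc n} - fst x"
    if "x \<in> (SIGMA B:D. Pow ({1..n} - B))" for x
    using that unfolding cone_face_def by (cases x) auto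
  moreover have "fst x = fst (cone_face n x)" for x
    unfolding cone_face_def by (cases x) auto
  ultimately show "x = y"
    by (metis prod.expand)
qed

lemma bier_faces_Int_cone_faces: "bier_faces n D \<inter> cone_face n ` X = {}"
  unfolding bier_faces_def cone_face_def by auto

lemma bier_faces_Suc:
  assumes "D \<subseteq> Pow {1..n}"
  shows "bier_faces (Suc n) D = bier_faces n D \<union> cone_face n ` (SIGMA B:D. Pow ({1..n} - B))"
proof (intro equalityI subsetI)
  fix F
  assume F: "F \<in> bier_faces (Suc n) D"
  then obtain B C where BC: "F = (B, C)" "B \<subset> C" "C \<subseteq> {1..Suc n}" "B \<in> D" "C \<notin> D"
    unfolding bier_faces_def by auto
  show "F \<in> bier_faces n D \<union> cone_face n ` (SIGMA B:D. Pow ({1..n} - B))"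
  proof (cases "Suc n \<in> C")
    case False
    then have "C \<subseteq> {1..n}"
      using BC(3) by (auto simp: subset_iff le_Suc_eq)
    then show ?thesis
      using BC unfolding bier_faces_def by auto
  next
    case True
    have "Suc n \<notin> B"
      using assms BC(4) by fastforce
    then have "F = cone_face n (B, C - {Suc n} - B)"
      using True BC unfolding cone_face_def by auto
    moreover have "(B, C - {Suc n} - B) \<in> (SIGMA B:D. Pow ({1..n} - B))"
      using BC by auto
    ultimately show ?thesis
      by blast
  qed
next
  fix F
  assume "F \<in> bier_faces n D \<union> cone_face n ` (SIGMA B:D. Pow ({1..n} - B))"
  then show "F \<in> bier_faces (Suc n) D"
  proof
    assume "F \<in> cone_face n ` (SIGMA B:D. Pow ({1..n} - B))"
    then obtain B S where "B \<in> D" "S \<subseteq> {1..n} - B" "F = (B, insert (Suc n) (B \<union> S))"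
      unfolding cone_face_def by auto
    moreover have "insert (Suc n) (B \<union> S) \<notin> D"
      using assms by fastforce
    ultimately show ?thesis
      using assms unfolding bier_faces_def by fastforce
  qed (auto simp: bier_faces_def)
qed

lemma face_vertices_cone_face:
  assumes "B \<subseteq> {1..n}" and "S \<subseteq> {1..n} - B"
  shows "face_vertices (Suc n) (cone_face n (B, S)) = n - card S"
proof -
  have "finite B" "finite S"
    using finite_subset[OF assms(1)] finite_subset[OF assms(2)] by auto
  moreover have "Suc n \<notin> B \<union> S" "B \<inter> S = {}"
    using assms by auto
  ultimately have "card (insert (Suc n) (B \<union> S)) = Suc (card B + card S)"
    by (simp add: card_Un_disjoint)
  then show ?thesis
    unfolding face_vertices_def cone_face_def by simp
qed

lemma sum_Pow_h_coeff_cone_face: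
  assumes "B \<subseteq> {1..n}" and "i \<le> n"
  shows "(\<Sum>S\<in>Pow ({1..n} - B). h_coeff (Suc n) i (face_vertices (Suc n) (cone_face n (B, S))))
    = of_bool (card B = i)"
proof -
  define X where "X = {1..n} - B"
  have "finite X"
    by (simp add: X_def)
  have card_B: "card B \<le> n"
    using card_mono[OF _ assms(1)] by simp
  have card_X: "card X = n - card B"
    unfolding X_def using assms(1) finite_subset[OF assms(1)] by (simp add: card_Diff_subset)
  have h_coeff_eq: "h_coeff (Suc n) i (n - card S)
      = (-1) ^ (i + card B) * ((-1) ^ (card X - card S) * int (card S choose (n - i)))"
    if "S \<in> Pow X" for S
  proof -
    have "card S \<le> card X"
      using that card_mono[OF \<open>finite X\<close>] by simp
    then have "i + (n - card S) = (i + card B) + (card X - card S)" and "n - (n - card S) = card S"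
      using card_X card_B by simp_all
    then show ?thesis
      unfolding h_coeff_def by (simp add: power_add)
  qed
  have "(\<Sum>S\<in>Pow X. h_coeff (Suc n) i (face_vertices (Suc n) (cone_face n (B, S))))
      = (\<Sum>S\<in>Pow X. h_coeff (Suc n) i (n - card S))"
    using assms(1) by (intro sum.cong refl) (simp add: X_def face_vertices_cone_face)
  also have "\<dots> = (-1) ^ (i + card B) * (\<Sum>S\<in>Pow X. (-1) ^ (card X - card S) * int (card S choose (n - i)))"
    using h_coeff_eq by (simp add: sum_distrib_left)
  also have "\<dots> = (-1) ^ (i + card B) * of_bool (card X = n - i)"
    by (simp only: sum_Pow_alternating_choose[OF \<open>finite X\<close>])
  also have "\<dots> = of_bool (card B = i)"
    using card_X card_B assms(2) by (auto simp flip: mult_2)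
  finally show ?thesis
    unfolding X_def .
qed

lemma sum_cone_faces_h_coeff:
  assumes "D \<subseteq> Pow {1..n}" and "i \<le> n"
  shows "(\<Sum>F\<in>cone_face n ` (SIGMA B:D. Pow ({1..n} - B)). h_coeff (Suc n) i (face_vertices (Suc n) F))
    = int (ideal_f D i)"
proof -
  have "finite D"
    using assms(1) by (rule finite_subset) simp
  have "(\<Sum>F\<in>cone_face n ` (SIGMA B:D. Pow ({1..n} - B)). h_coeff (Suc n) i (face_vertices (Suc n) F))
      = (\<Sum>B\<in>D. \<Sum>S\<in>Pow ({1..n} - B). h_coeff (Suc n) i (face_vertices (Suc n) (cone_face n (B, S))))"
    using \<open>finite D\<close> by (subst sum.reindex[OF inj_on_cone_face]) (simp add: sum.Sigma)
  also have "\<dots> = (\<Sum>B\<in>D. of_bool (card B = i))"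
    using assms by (intro sum.cong refl sum_Pow_h_coeff_cone_face) auto
  also have "\<dots> = int (ideal_f D i)"
    unfolding ideal_f_def using \<open>finite D\<close> by (simp add: Collect_conj_eq)
  finally show ?thesis .
qed

theorem mainTheorem11:
  fixes n i :: nat and D :: "nat set set"
  assumes "n \<ge> 2" and "proper_ideal n D" and "i \<le> n"
  shows "bier_h (n + 1) D (int i) = bier_h n D (int i - 1) + int (ideal_f D i)"
proof -
  have D_sub: "D \<subseteq> Pow {1..n}"
    using assms(2) unfolding proper_ideal_def by blast
  let ?cone = "cone_face n ` (SIGMA B:D. Pow ({1..n} - B))"
  let ?h = "\<lambda>F. h_coeff (Suc n) i (face_vertices (Suc n) F)"
  have "finite ?cone"
    using finite_bier_faces[of "Suc n" D] unfolding bier_faces_Suc[OF D_sub] by simp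
  have "bier_h (n + 1) D (int i) = (\<Sum>F\<in>bier_faces (Suc n) D. ?h F)"
    using assms(3) bier_h_eq_sum_faces[of i "Suc n" D] by simp
  also have "\<dots> = (\<Sum>F\<in>bier_faces n D. ?h F) + (\<Sum>F\<in>?cone. ?h F)"
    unfolding bier_faces_Suc[OF D_sub]
    using finite_bier_faces \<open>finite ?cone\<close> bier_faces_Int_cone_faces by (rule sum.union_disjoint)
  also have "\<dots> = bier_h n D (int i - 1) + int (ideal_f D i)"
    using sum_faces_h_coeff_Suc[of n i D] sum_cone_faces_h_coeff[OF D_sub assms(3)] assms by simp
  finally show ?thesis .
qed

end
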